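(* Let $\mathbf A\in\mathbb R^{n\times p}$ have columns $\mathbf a_1,\dots,\mathbf a_p$ normalized to zero sample mean and unit norm: $\mathbf 1^T\mathbf a_k=0$ and $\|\mathbf a_k\|_2=1$ for $k=1,\dots,p$, and let $\rho_{ij}=\mathbf a_i^T\mathbf a_j$. Let $\mathbf y\in\mathbb R^n$, let $\mathbf w$ be a weight vector as in the context and $\Delta:=\min\{w_l-w_{l+1}: l=1,\dots,p-1\}$. Let $\widehat{\mathbf x}$ be any minimizer of $\frac12\|\mathbf A\mathbf x-\mathbf y\|_2^2+\Omega_{\mathbf w}(\mathbf x)$ over $\mathbf x\in\mathbb R^p$. Then for every pair $(i,j)$ with $\|\mathbf y\|_2\sqrt{2-2\rho_{ij}\operatorname{sign}(\widehat x_i\widehat x_j)}<\Delta$, we have $|\widehat x_i|=|\widehat x_j|$.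
   Context: $\mathbf w=(w_1,\dots,w_p)\in\mathbb R^p_+$ satisfies $w_1\ge w_2\ge\cdots\ge w_p\ge0$ and $w_1>0$. The ordered weighted $\ell_1$ (OWL) norm is $\Omega_{\mathbf w}(\mathbf x)=\sum_{i=1}^p w_i|x|_{[i]}$, where $|x|_{[i]}$ denotes the $i$-th largest component of $\mathbf x$ in magnitude. $\mathbf 1$ is the all-ones vector; $\operatorname{sign}$ denotes the sign function. *)

theory Defs
  imports Complex_Main
begin

text \<open>Vectors in R^p are functions nat => real, only indices 0..<p matter (0-based).
  Matrices in R^(n x p) are functions nat => nat => real (row, column).\<close>

definition sorted_abs :: "nat \<Rightarrow> (nat \<Rightarrow> real) \<Rightarrow> nat \<Rightarrow> real" where
  "sorted_abs p x k = rev (sort (map (\<lambda>i. \<bar>x i\<bar>) [0..<p])) ! k"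

definition owl :: "nat \<Rightarrow> (nat \<Rightarrow> real) \<Rightarrow> (nat \<Rightarrow> real) \<Rightarrow> real" where
  "owl p w x = (\<Sum>k<p. w k * sorted_abs p x k)"

definition owl_weights :: "nat \<Rightarrow> (nat \<Rightarrow> real) \<Rightarrow> bool" where
  "owl_weights p w \<longleftrightarrow> 0 < p \<and> (\<forall>k. k + 1 < p \<longrightarrow> w (k + 1) \<le> w k)
      \<and> w (p - 1) \<ge> 0 \<and> w 0 > 0"

definition owl_objective :: "nat \<Rightarrow> nat \<Rightarrow> (nat \<Rightarrow> nat \<Rightarrow> real) \<Rightarrow> (nat \<Rightarrow> real)
    \<Rightarrow> (nat \<Rightarrow> real) \<Rightarrow> (nat \<Rightarrow> real) \<Rightarrow> real" where
  "owl_objective n p A y w x =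
     (1/2) * (\<Sum>r<n. ((\<Sum>k<p. A r k * x k) - y r)\<^sup>2) + owl p w x"

definition corr :: "nat \<Rightarrow> (nat \<Rightarrow> nat \<Rightarrow> real) \<Rightarrow> nat \<Rightarrow> nat \<Rightarrow> real" where
  "corr n A i j = (\<Sum>r<n. A r i * A r j)"

definition norm2 :: "nat \<Rightarrow> (nat \<Rightarrow> real) \<Rightarrow> real" where
  "norm2 n y = sqrt (\<Sum>r<n. (y r)\<^sup>2)"

definition weight_gap :: "nat \<Rightarrow> (nat \<Rightarrow> real) \<Rightarrow> real" where
  "weight_gap p w = Min {w l - w (l + 1) | l. l + 1 < p}"

end

theory Submission
  imports Defs "HOL-Library.Multiset" "HOL-Analysis.Convex"
begin

text \<open>Suppose \<open>|x\<^sub>i| > |x\<^sub>j|\<close> at a minimizer. Transfer a small amount \<open>t\<close> of magnitude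
  from coordinate \<open>i\<close> to coordinate \<open>j\<close>. For \<open>t\<close> below half the smallest gap between distinct
  magnitudes the sorted order of the magnitudes is preserved, so only two entries of the sorted
  vector move, in opposite directions, and the OWL penalty drops by at least \<open>t \<Delta>\<close>. The change
  of the least-squares term is \<open>t \<langle>r, d\<rangle> + t\<^sup>2 \<parallel>d\<parallel>\<^sup>2/2\<close>, where \<open>r\<close> is the residual,
  \<open>\<parallel>r\<parallel> \<le> \<parallel>y\<parallel>\<close> (compare with \<open>x = 0\<close>), and, with the signs of the transfer chosen suitably,
  \<open>\<parallel>d\<parallel>\<^sup>2 \<le> 2 - 2 \<rho>\<^sub>i\<^sub>j sign(x\<^sub>i x\<^sub>j)\<close>. By Cauchy--Schwarz and the hypothesis the
  first-order gain beats the first-order loss, contradicting minimality.\<close>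

lemma owl_weights_antimono:
  assumes "owl_weights p w" "k \<le> k'" "k' < p"
  shows "w k' \<le> w k"
  using assms(2,3)
proof (induction k' rule: dec_induct)
  case (step m)
  then have "w (m + 1) \<le> w m" using assms(1) unfolding owl_weights_def by auto
  with step show ?case by simp
qed simp

lemma owl_weights_nonneg:
  assumes "owl_weights p w" "k < p"
  shows "0 \<le> w k"
proof -
  have "w (p - 1) \<le> w k" using assms by (intro owl_weights_antimono) auto
  with assms(1) show ?thesis unfolding owl_weights_def by auto
qed

lemma weight_gap_le:
  assumes "owl_weights p w" "l < l'" "l' < p"
  shows "weight_gap p w \<le> w l - w l'"
proof -
  have gaps: "{w l - w (l + 1) | l. l + 1 < p} = (\<lambda>l. w l - w (l + 1)) ` {..<p - 1}" by auto
  have "weight_gap p w \<le> w l - w (l + 1)"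
    unfolding weight_gap_def gaps using assms by (intro Min_le) auto
  moreover have "w l' \<le> w (l + 1)" using assms by (intro owl_weights_antimono) auto
  ultimately show ?thesis by simp
qed

lemma sorted_abs_nonneg:
  assumes "k < p"
  shows "0 \<le> sorted_abs p x k"
proof -
  have "sorted_abs p x k \<in> set (rev (sort (map (\<lambda>i. \<bar>x i\<bar>) [0..<p])))"
    unfolding sorted_abs_def using assms by (intro nth_mem) simp
  then show ?thesis by auto
qed

lemma owl_nonneg:
  assumes "owl_weights p w"
  shows "0 \<le> owl p w x"
  unfolding owl_def using assms
  by (intro sum_nonneg mult_nonneg_nonneg owl_weights_nonneg sorted_abs_nonneg) auto

lemma owl_zero: "owl p w (\<lambda>_. 0) = 0"
proof -
  have "sorted_abs p (\<lambda>_. 0) k = 0" if "k < p" for k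
    using that unfolding sorted_abs_def by (simp add: map_replicate_const)
  then show ?thesis unfolding owl_def by simp
qed

lemma owl_eq_sum_sort:
  "owl p w x = (\<Sum>m<p. w (p - 1 - m) * sort (map (\<lambda>k. \<bar>x k\<bar>) [0..<p]) ! m)"
proof -
  let ?g = "\<lambda>m. w (p - 1 - m) * sort (map (\<lambda>k. \<bar>x k\<bar>) [0..<p]) ! m"
  have "owl p w x = (\<Sum>k<p. ?g (p - Suc k))"
    unfolding owl_def sorted_abs_def by (intro sum.cong) (auto simp: rev_nth)
  also have "\<dots> = sum ?g {..<p}" by (rule sum.nat_diff_reindex)
  finally show ?thesis .
qed

lemma sorted_list_update_pair:
  fixes L :: "'a::linorder list"
  assumes sorted: "sorted L" and "\<delta> < \<alpha>" "\<alpha> < length L"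
    and "L ! \<delta> \<le> b'" "b' \<le> a'" "a' \<le> L ! \<alpha>"
    and below: "\<And>k. k < \<alpha> \<Longrightarrow> L ! k \<le> a'"
    and above: "\<And>k. \<delta> < k \<Longrightarrow> k < length L \<Longrightarrow> b' \<le> L ! k"
  shows "sorted (L[\<alpha> := a', \<delta> := b'])"
  unfolding sorted_iff_nth_mono
proof (intro allI impI)
  fix k k' assume "k \<le> k'" "k' < length (L[\<alpha> := a', \<delta> := b'])"
  then have "k \<le> k'" "k' < length L" by auto
  moreover have "L ! k \<le> L ! k'" using calculation sorted by (simp add: sorted_nth_mono)
  moreover have "L ! \<alpha> \<le> L ! k'" if "\<alpha> \<le> k'" using that calculation sorted
    by (simp add: sorted_nth_mono)
  moreover have "L ! k \<le> L ! \<delta>" if "k \<le> \<delta>" using that assms sorted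
    by (simp add: sorted_nth_mono)
  ultimately show "L[\<alpha> := a', \<delta> := b'] ! k \<le> L[\<alpha> := a', \<delta> := b'] ! k'"
    using assms below[of k] above[of k'] by (auto simp: nth_list_update)
qed

lemma sort_list_update_pair:
  fixes vs :: "real list"
  assumes "i < length vs" "j < length vs" "vs ! i = a" "vs ! j = b" "b < a" "0 < t"
    and gap: "\<And>u v. u \<in> set vs \<Longrightarrow> v \<in> set vs \<Longrightarrow> u < v \<Longrightarrow> 2 * t \<le> v - u"
  obtains \<alpha> \<delta> where "\<delta> < \<alpha>" "\<alpha> < length vs" "sort vs ! \<alpha> = a" "sort vs ! \<delta> = b"
    "sort (vs[i := a - t, j := b + t]) = (sort vs)[\<alpha> := a - t, \<delta> := b + t]"
proof -
  define L where "L = sort vs"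
  have sorted: "sorted L" and len: "length L = length vs" and set: "set L = set vs"
    by (auto simp: L_def)
  have a: "a \<in> set vs" and b: "b \<in> set vs" using assms nth_mem by blast+
  have "\<exists>k. k < length L \<and> L ! k = a" using a set by (metis in_set_conv_nth)
  then obtain \<alpha> where \<alpha>: "\<alpha> < length L" "L ! \<alpha> = a"
    and \<alpha>_first: "\<forall>k<\<alpha>. \<not> (k < length L \<and> L ! k = a)"
    unfolding exists_least_iff[of "\<lambda>k. k < length L \<and> L ! k = a"] by blast
  obtain \<delta> where \<delta>: "\<delta> < length L" "L ! \<delta> = b"
    and \<delta>_last: "\<And>k. \<delta> < k \<Longrightarrow> k < length L \<Longrightarrow> L ! k \<noteq> b"
  proof -
    obtain k where k: "k < length L \<and> L ! k = b" using b set by (metis in_set_conv_nth)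
    let ?\<delta> = "GREATEST k. k < length L \<and> L ! k = b"
    have "?\<delta> < length L \<and> L ! ?\<delta> = b"
      using GreatestI_nat[of "\<lambda>k. k < length L \<and> L ! k = b" k "length L"] k by auto
    moreover have "L ! k' \<noteq> b" if "?\<delta> < k'" "k' < length L" for k'
      using Greatest_le_nat[of "\<lambda>k. k < length L \<and> L ! k = b" k' "length L"] that by auto
    ultimately show thesis using that by blast
  qed
  have "\<delta> < \<alpha>"
    using sorted \<alpha> \<delta> \<open>b < a\<close> by (metis leD not_less sorted_nth_mono)
  have below: "L ! k \<le> a - t" if "k < \<alpha>" for k
  proof -
    have "L ! k \<le> a" using sorted \<alpha> that by (metis less_imp_le_nat sorted_nth_mono)
    with \<alpha>_first that \<alpha> have "L ! k < a" by auto
    moreover have "L ! k \<in> set vs" using that \<alpha> set by (metis nth_mem order.strict_trans)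
    ultimately show ?thesis using gap[of "L ! k" a] a \<open>0 < t\<close> by auto
  qed
  have above: "b + t \<le> L ! k" if "\<delta> < k" "k < length L" for k
  proof -
    have "b \<le> L ! k" using sorted \<delta> that by (metis less_imp_le_nat sorted_nth_mono)
    with \<delta>_last[OF that] have "b < L ! k" by auto
    moreover have "L ! k \<in> set vs" using that set by (metis nth_mem)
    ultimately show ?thesis using gap[of b "L ! k"] b \<open>0 < t\<close> by auto
  qed
  have "b + t \<le> a - t" using gap[OF b a \<open>b < a\<close>] by simp
  then have "sorted (L[\<alpha> := a - t, \<delta> := b + t])"
    using \<open>\<delta> < \<alpha>\<close> \<alpha> \<delta> \<open>0 < t\<close> below above by (intro sorted_list_update_pair[OF sorted]) auto
  moreover have "mset (L[\<alpha> := a - t, \<delta> := b + t]) = mset (vs[i := a - t, j := b + t])"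
    using assms \<alpha> \<delta> \<open>\<delta> < \<alpha>\<close> len \<open>b < a\<close> by (auto simp: L_def mset_update nth_list_update)
  ultimately have "sort (vs[i := a - t, j := b + t]) = L[\<alpha> := a - t, \<delta> := b + t]"
    by (intro properties_for_sort) auto
  with that \<open>\<delta> < \<alpha>\<close> \<alpha> \<delta> len show ?thesis unfolding L_def by auto
qed

lemma finite_set_separated:
  fixes S :: "real set"
  assumes "finite S"
  obtains g where "0 < g" "\<And>u v. u \<in> S \<Longrightarrow> v \<in> S \<Longrightarrow> u < v \<Longrightarrow> g \<le> v - u"
proof -
  define G where "G = {v - u | u v. u \<in> S \<and> v \<in> S \<and> u < v}"
  have "G \<subseteq> (\<lambda>(u, v). v - u) ` (S \<times> S)" unfolding G_def by auto
  then have "finite G" by (rule finite_subset) (simp add: assms)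
  show thesis
  proof (cases "G = {}")
    case True
    then show thesis by (intro that[of 1]) (auto simp: G_def)
  next
    case False
    have "0 < Min G" using \<open>finite G\<close> False by (subst Min_gr_iff) (auto simp: G_def)
    moreover have "Min G \<le> v - u" if "u \<in> S" "v \<in> S" "u < v" for u v
      using \<open>finite G\<close> that by (intro Min_le) (auto simp: G_def)
    ultimately show thesis by (rule that)
  qed
qed

lemma owl_transfer_decrease:
  assumes w: "owl_weights p w" and "i < p" "j < p" and ji: "\<bar>x j\<bar> < \<bar>x i\<bar>"
  obtains \<tau> where "0 < \<tau>"
    and "\<And>t x'. 0 < t \<Longrightarrow> t \<le> \<tau> \<Longrightarrow> \<bar>x' i\<bar> = \<bar>x i\<bar> - t \<Longrightarrow> \<bar>x' j\<bar> = \<bar>x j\<bar> + t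
      \<Longrightarrow> (\<And>k. k \<noteq> i \<Longrightarrow> k \<noteq> j \<Longrightarrow> \<bar>x' k\<bar> = \<bar>x k\<bar>)
      \<Longrightarrow> owl p w x' \<le> owl p w x - t * weight_gap p w"
proof -
  define a where "a = \<bar>x i\<bar>"
  define b where "b = \<bar>x j\<bar>"
  define vals where "vals = map (\<lambda>k. \<bar>x k\<bar>) [0..<p]"
  have vals_ij: "i < length vals" "j < length vals" "vals ! i = a" "vals ! j = b"
    using assms by (auto simp: vals_def a_def b_def)
  obtain g where "0 < g" and g: "\<And>u v. u \<in> set vals \<Longrightarrow> v \<in> set vals \<Longrightarrow> u < v \<Longrightarrow> g \<le> v - u"
    using finite_set_separated[of "set vals"] by blast
  define \<tau> where "\<tau> = g / 2"
  have "0 < \<tau>" using \<open>0 < g\<close> by (simp add: \<tau>_def)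
  have gap: "2 * t \<le> v - u" if "t \<le> \<tau>" "u \<in> set vals" "v \<in> set vals" "u < v" for t u v
    using that g[of u v] by (simp add: \<tau>_def)
  show thesis
  proof (rule that[OF \<open>0 < \<tau>\<close>])
    fix t x' assume t: "0 < t" "t \<le> \<tau>" and x'_i: "\<bar>x' i\<bar> = \<bar>x i\<bar> - t"
      and x'_j: "\<bar>x' j\<bar> = \<bar>x j\<bar> + t" and x'_k: "\<And>k. k \<noteq> i \<Longrightarrow> k \<noteq> j \<Longrightarrow> \<bar>x' k\<bar> = \<bar>x k\<bar>"
    have "i \<noteq> j" using ji by auto
    have vals': "map (\<lambda>k. \<bar>x' k\<bar>) [0..<p] = vals[i := a - t, j := b + t]"
    proof (rule nth_equalityI)
      fix k assume "k < length (map (\<lambda>k. \<bar>x' k\<bar>) [0..<p])"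
      then show "map (\<lambda>k. \<bar>x' k\<bar>) [0..<p] ! k = vals[i := a - t, j := b + t] ! k"
        using \<open>i \<noteq> j\<close> \<open>i < p\<close> \<open>j < p\<close> x'_k[of k]
        by (cases "k = i"; cases "k = j") (auto simp: vals_def a_def b_def x'_i x'_j)
    qed (simp add: vals_def)
    have "b < a" using ji by (simp add: a_def b_def)
    obtain \<alpha> \<delta> where "\<delta> < \<alpha>" "\<alpha> < length vals" "sort vals ! \<alpha> = a" "sort vals ! \<delta> = b"
      and sort': "sort (vals[i := a - t, j := b + t]) = (sort vals)[\<alpha> := a - t, \<delta> := b + t]"
      by (rule sort_list_update_pair[OF vals_ij \<open>b < a\<close> t(1) gap[OF t(2)]])
    have "\<alpha> < p" using \<open>\<alpha> < length vals\<close> by (simp add: vals_def)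
    have "owl p w x' = (\<Sum>m<p. w (p - 1 - m) * (sort vals)[\<alpha> := a - t, \<delta> := b + t] ! m)"
      unfolding owl_eq_sum_sort vals' sort' ..
    also have "\<dots> = (\<Sum>m<p. w (p - 1 - m) * sort vals ! m
        - (if m = \<alpha> then t * w (p - 1 - m) else 0) + (if m = \<delta> then t * w (p - 1 - m) else 0))"
      using \<open>\<delta> < \<alpha>\<close> \<open>\<alpha> < p\<close> \<open>sort vals ! \<alpha> = a\<close> \<open>sort vals ! \<delta> = b\<close>
      by (intro sum.cong) (auto simp: nth_list_update vals_def algebra_simps)
    also have "\<dots> = owl p w x - t * w (p - 1 - \<alpha>) + t * w (p - 1 - \<delta>)"
      using \<open>\<delta> < \<alpha>\<close> \<open>\<alpha> < p\<close>
      by (simp add: sum.distrib sum_subtractf owl_eq_sum_sort vals_def)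
    also have "\<dots> \<le> owl p w x - t * weight_gap p w"
    proof -
      have "p - 1 - \<alpha> < p - 1 - \<delta>" using \<open>\<delta> < \<alpha>\<close> \<open>\<alpha> < p\<close> by linarith
      from mult_left_mono[OF weight_gap_le[OF w this], of t] t(1) show ?thesis
        using \<open>\<alpha> < p\<close> by (simp add: right_diff_distrib)
    qed
    finally show "owl p w x' \<le> owl p w x - t * weight_gap p w" .
  qed
qed

lemma owl_minimizer_residual_le:
  assumes "owl_weights p w" and minim: "\<And>x. owl_objective n p A y w xh \<le> owl_objective n p A y w x"
  shows "(\<Sum>r<n. ((\<Sum>k<p. A r k * xh k) - y r)\<^sup>2) \<le> (\<Sum>r<n. (y r)\<^sup>2)"
proof -
  have "owl_objective n p A y w xh \<le> owl_objective n p A y w (\<lambda>_. 0)" by (rule minim)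
  then show ?thesis using owl_nonneg[OF assms(1), of xh] by (simp add: owl_objective_def owl_zero)
qed

lemma sum_square_shift_le:
  fixes e d :: "nat \<Rightarrow> real"
  assumes "0 \<le> t"
  shows "(\<Sum>r<n. (e r + t * d r)\<^sup>2)
    \<le> (\<Sum>r<n. (e r)\<^sup>2) + 2 * t * (sqrt (\<Sum>r<n. (e r)\<^sup>2) * sqrt (\<Sum>r<n. (d r)\<^sup>2))
      + t\<^sup>2 * (\<Sum>r<n. (d r)\<^sup>2)"
proof -
  have "(\<Sum>r<n. e r * d r) \<le> sqrt ((\<Sum>r<n. e r * d r)\<^sup>2)" by simp
  also have "\<dots> \<le> sqrt ((\<Sum>r<n. (e r)\<^sup>2) * (\<Sum>r<n. (d r)\<^sup>2))"
    by (rule real_sqrt_le_mono) (rule Cauchy_Schwarz_ineq_sum)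
  finally have "(\<Sum>r<n. e r * d r) \<le> sqrt (\<Sum>r<n. (e r)\<^sup>2) * sqrt (\<Sum>r<n. (d r)\<^sup>2)"
    by (simp add: real_sqrt_mult)
  with assms have "2 * t * (\<Sum>r<n. e r * d r)
      \<le> 2 * t * (sqrt (\<Sum>r<n. (e r)\<^sup>2) * sqrt (\<Sum>r<n. (d r)\<^sup>2))"
    by (simp add: mult_left_mono)
  then show ?thesis
    by (simp add: power2_eq_square algebra_simps sum.distrib sum_distrib_left)
qed

lemma sum_square_signed_columns:
  fixes A :: "nat \<Rightarrow> nat \<Rightarrow> real"
  assumes "(\<Sum>r<n. (A r i)\<^sup>2) = 1" "(\<Sum>r<n. (A r j)\<^sup>2) = 1" "\<bar>s\<bar> = 1" "\<bar>\<sigma>\<bar> = 1"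
  shows "(\<Sum>r<n. (\<sigma> * A r j - s * A r i)\<^sup>2) = 2 - 2 * s * \<sigma> * corr n A i j"
proof -
  have "s * s = 1" "\<sigma> * \<sigma> = 1" using assms(3,4) by (metis abs_mult_self_eq mult_1_right)+
  moreover have "(\<Sum>r<n. (\<sigma> * A r j - s * A r i)\<^sup>2)
      = \<sigma> * \<sigma> * (\<Sum>r<n. (A r j)\<^sup>2) + s * s * (\<Sum>r<n. (A r i)\<^sup>2) - 2 * s * \<sigma> * corr n A i j"
    unfolding corr_def
    by (simp add: power2_eq_square algebra_simps sum.distrib sum_distrib_left sum_subtractf)
  ultimately show ?thesis using assms(1,2) by simp
qed

lemma sum_mult_two_points:
  fixes f :: "nat \<Rightarrow> real"
  assumes "i < p" "j < p" "i \<noteq> j"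
  shows "(\<Sum>k<p. f k * (if k = i then u else if k = j then v else 0)) = u * f i + v * f j"
proof -
  have "(\<Sum>k<p. f k * (if k = i then u else if k = j then v else 0))
      = (\<Sum>k<p. if k = i then f k * u else 0) + (\<Sum>k<p. if k = j then f k * v else 0)"
    using assms(3) by (subst sum.distrib[symmetric]) (rule sum.cong; auto)
  with assms show ?thesis by simp
qed

text \<open>When \<open>b = 0\<close> the direction \<open>\<sigma>\<close> is free and is chosen to match the sign of \<open>\<rho>\<close>.\<close>

lemma transfer_signs:
  fixes a b \<rho> :: real
  assumes "a \<noteq> 0"
  obtains s \<sigma> where "\<bar>s\<bar> = 1" "\<bar>\<sigma>\<bar> = 1"
    "\<And>t. 0 \<le> t \<Longrightarrow> t \<le> \<bar>a\<bar> \<Longrightarrow> \<bar>a - t * s\<bar> = \<bar>a\<bar> - t"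
    "\<And>t. 0 \<le> t \<Longrightarrow> \<bar>b + t * \<sigma>\<bar> = \<bar>b\<bar> + t"
    "\<rho> * sgn (a * b) \<le> s * \<sigma> * \<rho>"
proof
  let ?\<sigma> = "if b \<noteq> 0 then sgn b else sgn a * (if 0 \<le> \<rho> then 1 else -1)"
  show "\<bar>sgn a\<bar> = 1" "\<bar>?\<sigma>\<bar> = 1" using assms by (auto simp: abs_mult)
  show "\<bar>a - t * sgn a\<bar> = \<bar>a\<bar> - t" if "0 \<le> t" "t \<le> \<bar>a\<bar>" for t
    using that by (cases "0 < a") (auto simp: sgn_if)
  show "\<bar>b + t * ?\<sigma>\<bar> = \<bar>b\<bar> + t" if "0 \<le> t" for t
    using that assms by (cases "0 < b"; cases "b = 0"; cases "0 < a") (auto simp: sgn_if)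
  have "sgn a * sgn a = 1" using assms by (simp add: sgn_if)
  then show "\<rho> * sgn (a * b) \<le> sgn a * ?\<sigma> * \<rho>"
  proof (cases "b = 0")
    case True
    have "sgn a * ?\<sigma> * \<rho> = sgn a * sgn a * ((if 0 \<le> \<rho> then 1 else -1) * \<rho>)"
      using True by (simp add: mult.assoc)
    with \<open>sgn a * sgn a = 1\<close> True show ?thesis by simp
  qed (simp add: sgn_mult)
qed

lemma least_squares_transfer_le:
  fixes A :: "nat \<Rightarrow> nat \<Rightarrow> real" and y xh :: "nat \<Rightarrow> real"
  assumes unit: "\<And>k. k < p \<Longrightarrow> (\<Sum>r<n. (A r k)\<^sup>2) = 1"
    and residual: "(\<Sum>r<n. ((\<Sum>k<p. A r k * xh k) - y r)\<^sup>2) \<le> (\<Sum>r<n. (y r)\<^sup>2)"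
    and ij: "i < p" "j < p" "i \<noteq> j" and s: "\<bar>s\<bar> = 1" and \<sigma>: "\<bar>\<sigma>\<bar> = 1" and "0 \<le> t"
  shows "(\<Sum>r<n. ((\<Sum>k<p. A r k * (xh k + t * (if k = i then - s else if k = j then \<sigma> else 0)))
            - y r)\<^sup>2)
      \<le> (\<Sum>r<n. ((\<Sum>k<p. A r k * xh k) - y r)\<^sup>2)
        + 2 * t * (norm2 n y * sqrt (2 - 2 * s * \<sigma> * corr n A i j))
        + t\<^sup>2 * (2 - 2 * s * \<sigma> * corr n A i j)"
proof -
  define e where "e r = (\<Sum>k<p. A r k * xh k) - y r" for r
  define d where "d r = \<sigma> * A r j - s * A r i" for r
  define v where "v k = (if k = i then - s else if k = j then \<sigma> else (0::real))" for k
  have c: "(\<Sum>r<n. (d r)\<^sup>2) = 2 - 2 * s * \<sigma> * corr n A i j"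
    unfolding d_def by (rule sum_square_signed_columns[OF unit[OF ij(1)] unit[OF ij(2)] s \<sigma>])
  have "(\<Sum>k<p. A r k * (xh k + t * v k)) = (\<Sum>k<p. A r k * xh k) + t * (\<Sum>k<p. A r k * v k)" for r
    by (simp add: algebra_simps sum.distrib sum_distrib_left)
  moreover have "(\<Sum>k<p. A r k * v k) = d r" for r
    unfolding v_def d_def using sum_mult_two_points[OF ij, of "A r" "- s" \<sigma>] by simp
  ultimately have shift: "(\<Sum>k<p. A r k * (xh k + t * v k)) - y r = e r + t * d r" for r
    by (simp add: e_def)
  have "sqrt (\<Sum>r<n. (e r)\<^sup>2) \<le> norm2 n y"
    unfolding e_def norm2_def using residual by simp
  then have "sqrt (\<Sum>r<n. (e r)\<^sup>2) * sqrt (\<Sum>r<n. (d r)\<^sup>2)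
      \<le> norm2 n y * sqrt (\<Sum>r<n. (d r)\<^sup>2)"
    by (rule mult_right_mono) (simp_all add: sum_nonneg)
  then show ?thesis
    using sum_square_shift_le[OF \<open>0 \<le> t\<close>, where e = e and d = d and n = n] \<open>0 \<le> t\<close>
    unfolding v_def[symmetric] shift c[symmetric] by (simp add: e_def) (smt (verit) mult_left_mono)
qed

lemma corr_commute: "corr n A i j = corr n A j i"
  unfolding corr_def by (simp add: mult.commute)

lemma owl_minimizer_abs_not_less:
  fixes A :: "nat \<Rightarrow> nat \<Rightarrow> real" and y w xh :: "nat \<Rightarrow> real"
  assumes wts: "owl_weights p w"
    and unit: "\<And>k. k < p \<Longrightarrow> (\<Sum>r<n. (A r k)\<^sup>2) = 1"
    and minim: "\<And>x. owl_objective n p A y w xh \<le> owl_objective n p A y w x"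
    and ij: "i < p" "j < p"
    and cond: "norm2 n y * sqrt (2 - 2 * corr n A i j * sgn (xh i * xh j)) < weight_gap p w"
  shows "\<not> \<bar>xh j\<bar> < \<bar>xh i\<bar>"
proof
  assume ji: "\<bar>xh j\<bar> < \<bar>xh i\<bar>"
  then have "i \<noteq> j" "xh i \<noteq> 0" by auto
  obtain \<tau> where "0 < \<tau>" and owl_step: "\<And>t x'. 0 < t \<Longrightarrow> t \<le> \<tau>
      \<Longrightarrow> \<bar>x' i\<bar> = \<bar>xh i\<bar> - t \<Longrightarrow> \<bar>x' j\<bar> = \<bar>xh j\<bar> + t
      \<Longrightarrow> (\<And>k. k \<noteq> i \<Longrightarrow> k \<noteq> j \<Longrightarrow> \<bar>x' k\<bar> = \<bar>xh k\<bar>)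
      \<Longrightarrow> owl p w x' \<le> owl p w xh - t * weight_gap p w"
    using owl_transfer_decrease[OF wts ij ji] by blast
  obtain s \<sigma> where s: "\<bar>s\<bar> = 1" and \<sigma>: "\<bar>\<sigma>\<bar> = 1"
    and shrink_i: "\<And>t. 0 \<le> t \<Longrightarrow> t \<le> \<bar>xh i\<bar> \<Longrightarrow> \<bar>xh i - t * s\<bar> = \<bar>xh i\<bar> - t"
    and grow_j: "\<And>t. 0 \<le> t \<Longrightarrow> \<bar>xh j + t * \<sigma>\<bar> = \<bar>xh j\<bar> + t"
    and signs: "corr n A i j * sgn (xh i * xh j) \<le> s * \<sigma> * corr n A i j"
    using transfer_signs[OF \<open>xh i \<noteq> 0\<close>, of "xh j" "corr n A i j"] by blast
  define c where "c = 2 - 2 * s * \<sigma> * corr n A i j"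
  define K where "K = 2 - 2 * corr n A i j * sgn (xh i * xh j)"
  define \<epsilon> where "\<epsilon> = weight_gap p w - norm2 n y * sqrt K"
  have "0 < \<epsilon>" using cond by (simp add: \<epsilon>_def K_def)
  have residual: "(\<Sum>r<n. ((\<Sum>k<p. A r k * xh k) - y r)\<^sup>2) \<le> (\<Sum>r<n. (y r)\<^sup>2)"
    by (rule owl_minimizer_residual_le[OF wts minim])
  have "c \<le> K" using signs by (simp add: c_def K_def)
  moreover have "0 \<le> c"
    using sum_square_signed_columns[OF unit[OF ij(1)] unit[OF ij(2)] s \<sigma>, symmetric]
    by (simp add: c_def sum_nonneg)
  ultimately have "0 \<le> K" "sqrt c \<le> sqrt K" by auto
  define t where "t = min \<tau> (min \<bar>xh i\<bar> (\<epsilon> / (K + 1)))"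
  have t: "0 < t" "t \<le> \<tau>" "t \<le> \<bar>xh i\<bar>" "t \<le> \<epsilon> / (K + 1)"
    using \<open>0 < \<tau>\<close> \<open>xh i \<noteq> 0\<close> \<open>0 < \<epsilon>\<close> \<open>0 \<le> K\<close> by (auto simp: t_def)
  define x' where "x' k = xh k + t * (if k = i then - s else if k = j then \<sigma> else 0)" for k
  have "owl p w x' \<le> owl p w xh - t * weight_gap p w"
    using t \<open>i \<noteq> j\<close> shrink_i[of t] grow_j[of t] by (intro owl_step) (auto simp: x'_def)
  moreover have "(\<Sum>r<n. ((\<Sum>k<p. A r k * x' k) - y r)\<^sup>2)
      \<le> (\<Sum>r<n. ((\<Sum>k<p. A r k * xh k) - y r)\<^sup>2) + 2 * t * (norm2 n y * sqrt K) + t\<^sup>2 * K"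
  proof -
    have "norm2 n y * sqrt c \<le> norm2 n y * sqrt K"
      using \<open>sqrt c \<le> sqrt K\<close> by (intro mult_left_mono) (simp_all add: norm2_def sum_nonneg)
    moreover have "t\<^sup>2 * c \<le> t\<^sup>2 * K" using \<open>c \<le> K\<close> by (simp add: mult_left_mono)
    ultimately show ?thesis
      using least_squares_transfer_le[OF unit residual ij \<open>i \<noteq> j\<close> s \<sigma> less_imp_le[OF t(1)]] t(1)
      unfolding x'_def c_def
      by (smt (verit) mult_left_mono)
  qed
  ultimately have "owl_objective n p A y w x' \<le> owl_objective n p A y w xh - t * (\<epsilon> - t * K / 2)"
    by (simp add: owl_objective_def \<epsilon>_def power2_eq_square algebra_simps)
  moreover have "0 < t * (\<epsilon> - t * K / 2)"
  proof -
    have "t * (K + 1) \<le> \<epsilon>" using t(4) \<open>0 \<le> K\<close> by (simp add: pos_le_divide_eq)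
    moreover have "0 \<le> t * K" using t(1) \<open>0 \<le> K\<close> by simp
    ultimately have "t * K / 2 < \<epsilon>" using t(1) by (simp add: distrib_left)
    with t(1) show ?thesis by simp
  qed
  ultimately show False using minim[of x'] by simp
qed

theorem corollary1:
  fixes n p :: nat and A :: "nat \<Rightarrow> nat \<Rightarrow> real" and y w xh :: "nat \<Rightarrow> real"
    and i j :: nat
  assumes wts: "owl_weights p w"
    and mean0: "\<And>k. k < p \<Longrightarrow> (\<Sum>r<n. A r k) = 0"
    and unit: "\<And>k. k < p \<Longrightarrow> (\<Sum>r<n. (A r k)\<^sup>2) = 1"
    and minim: "\<And>x. owl_objective n p A y w xh \<le> owl_objective n p A y w x"
    and ij: "i < p" "j < p"
    and cond: "norm2 n y * sqrt (2 - 2 * corr n A i j * sgn (xh i * xh j)) < weight_gap p w"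
  shows "\<bar>xh i\<bar> = \<bar>xh j\<bar>"
proof -
  have cond': "norm2 n y * sqrt (2 - 2 * corr n A j i * sgn (xh j * xh i)) < weight_gap p w"
    using cond by (simp add: corr_commute[of n A i j] mult.commute)
  show ?thesis
    using owl_minimizer_abs_not_less[OF wts unit minim ij cond]
      owl_minimizer_abs_not_less[OF wts unit minim ij(2,1) cond'] by linarith
qed

end
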